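(* Let $p\ge 5$ be a prime and $m\in\mathbb{N}$. If there exist $u,v\in\mathbb{Z}$ with $\gcd(u,v)=1$ such that $$u+\delta_4 v=3^m\quad\text{and}\quad H_p(u,v)=1,$$ then $p\equiv 5$ or $11\pmod{24}$.
   Context: For an odd prime $p$ put $\delta_4=1$ if $p\equiv 1\pmod 4$, $\delta_4=-1$ if $p\equiv 3\pmod 4$. Let $G_p(u,v)=\mathrm{Im}\big((1+i)(u+iv)^p\big)\in\mathbb{Z}[u,v]$ (for real $u,v$); $u+\delta_4 v$ divides $G_p$ in $\mathbb{Z}[u,v]$, and $H_p(u,v):=G_p(u,v)/(u+\delta_4 v)\in\mathbb{Z}[u,v]$. $\mathbb{N}$ denotes the positive integers. *)

theory Defs
  imports Complex_Main "HOL-Computational_Algebra.Primes"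
begin

definition delta4 :: "nat \<Rightarrow> int" where
  "delta4 p = (if p mod 4 = 1 then 1 else -1)"

definition G :: "nat \<Rightarrow> int \<Rightarrow> int \<Rightarrow> real" where
  "G p u v = Im ((1 + \<i>) * (complex_of_int u + \<i> * complex_of_int v) ^ p)"

text \<open>H_p(u,v) = G_p(u,v) / (u + delta4 v); evaluation of the polynomial quotient,
  valid (exact) whenever u + delta4 v is nonzero.\<close>
definition H :: "nat \<Rightarrow> int \<Rightarrow> int \<Rightarrow> real" where
  "H p u v = G p u v / real_of_int (u + delta4 p * v)"

end

theory Submission
  imports Defs "HOL-Number_Theory.Number_Theory"
begin

(* Put d = delta4 p, s = u + d v = 3^m and w = i - d, so that u + i v = s + v w, and let
   c_k = Im((1 + i) w^k).  Expanding (1 + i)(s + v w)^p binomially, the constant term c_p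
   vanishes and H_p(u,v) = sum_{j >= 1} C(p,j) s^(j-1) v^(p-j) c_(p-j).  If 3^a divides p - 1,
   every term with j >= 2 is divisible by 3^(a+1), so H_p(u,v) = 1 gives
   p v^(p-1) c_(p-1) = 1 (mod 3^(a+1)).  As w^4 = -4, c_(p-1) = +-2^((p-1)/2), and by Euler's
   theorem both v^(p-1) and c_(p-1)^2 are 1 modulo 3^(a+1); hence p^2 = 1 (mod 3^(a+1)).
   For a the exact exponent of 3 in p - 1 this rules out p = 1 (mod 3).  So p = 2 (mod 3),
   and modulo 3 the congruence reads -c_(p-1) = 1, whereas c_(p-1) = 1 (mod 3) exactly
   when p = +-1 (mod 8). *)

(* The integer c_k = Im((1 + i)(i - d)^k) of the proof idea, defined by the recurrence coming
   from (i - d)^2 = -2d (i - d) - (d^2 + 1). *)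
fun gauss_im :: "int \<Rightarrow> nat \<Rightarrow> int" where
  "gauss_im d 0 = 1"
| "gauss_im d (Suc 0) = 1 - d"
| "gauss_im d (Suc (Suc k)) = - 2 * d * gauss_im d (Suc k) - (d\<^sup>2 + 1) * gauss_im d k"

lemma of_int_gauss_im: "of_int (gauss_im d k) = Im ((1 + \<i>) * (\<i> - of_int d) ^ k)"
proof (induction d k rule: gauss_im.induct)
  case (3 d k)
  let ?z = "\<lambda>k. (1 + \<i>) * (\<i> - of_int d) ^ k"
  have "?z (Suc (Suc k)) = of_int (- 2 * d) * ?z (Suc k) - of_int (d\<^sup>2 + 1) * ?z k"
    by (simp add: power2_eq_square algebra_simps)
  then show ?case using 3 by simp
qed (simp_all add: algebra_simps)

lemma i_minus_unit_power4: "(d::int)\<^sup>2 = 1 \<Longrightarrow> (\<i> - of_int d) ^ 4 = -4"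
proof -
  assume "d\<^sup>2 = 1"
  then have "d = 1 \<or> d = -1" by (simp add: power2_eq_1_iff)
  then show ?thesis by (auto simp: numeral_eq_Suc algebra_simps)
qed

lemma gauss_im_delta4:
  assumes "odd p"
  shows "gauss_im (delta4 p) p = 0"
    and "gauss_im (delta4 p) (p - 1) = (-1) ^ (p div 4) * 2 ^ (p div 2)"
proof -
  define k where "k = p div 4"
  define w where "w = \<i> - of_int (delta4 p)"
  define c :: int where "c = (-1) ^ k * 2 ^ (2 * k)"
  have w4k: "w ^ (4 * k) = of_int c"
    unfolding power_mult w_def c_def
    by (subst i_minus_unit_power4) (simp_all add: delta4_def power_mult power_minus')
  have "Im ((1 + \<i>) * w ^ p) = 0 \<and> Im ((1 + \<i>) * w ^ (p - 1)) = (-1) ^ k * 2 ^ (p div 2)"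
  proof (cases "p mod 4 = 1")
    case True
    then have p: "p = 4 * k + 1" and "p div 2 = 2 * k" unfolding k_def by presburger+
    have "(1 + \<i>) * w = -2" using True by (simp add: w_def delta4_def algebra_simps)
    moreover have "(1 + \<i>) * w ^ p = (1 + \<i>) * w * w ^ (4 * k)"
      unfolding p by (simp add: power_add mult_ac)
    moreover have "w ^ (p - 1) = of_int c" using w4k unfolding p by simp
    ultimately show ?thesis using w4k \<open>p div 2 = 2 * k\<close> by (simp add: c_def)
  next
    case False
    then have p: "p = 4 * k + 3" and "p div 2 = 2 * k + 1" using assms unfolding k_def by presburger+
    have "w = \<i> + 1" using False by (simp add: w_def delta4_def)
    then have "(1 + \<i>) * w ^ 3 = -4" "(1 + \<i>) * w ^ 2 = 2 * \<i> - 2"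
      by (simp_all add: numeral_eq_Suc algebra_simps)
    moreover have "(1 + \<i>) * w ^ p = (1 + \<i>) * w ^ 3 * w ^ (4 * k)"
      unfolding p by (simp add: power_add mult_ac)
    moreover have "(1 + \<i>) * w ^ (p - 1) = (1 + \<i>) * w ^ 2 * w ^ (4 * k)"
      unfolding p by (simp add: power_add power2_eq_square mult_ac)
    ultimately show ?thesis using w4k \<open>p div 2 = 2 * k + 1\<close> by (simp add: c_def)
  qed
  then have "real_of_int (gauss_im (delta4 p) p) = 0"
    and "real_of_int (gauss_im (delta4 p) (p - 1)) = of_int ((-1) ^ k * 2 ^ (p div 2))"
    unfolding of_int_gauss_im w_def by simp_all
  then show "gauss_im (delta4 p) p = 0"
    and "gauss_im (delta4 p) (p - 1) = (-1) ^ (p div 4) * 2 ^ (p div 2)"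
    unfolding k_def of_int_eq_iff by simp_all
qed

lemma gauss_im_delta4_square:
  assumes "odd p"
  shows "(gauss_im (delta4 p) (p - 1))\<^sup>2 = 2 ^ (p - 1)"
proof -
  have "p - 1 = p div 2 * 2" using assms by presburger
  then show ?thesis
    unfolding gauss_im_delta4(2)[OF assms] by (simp add: power_mult_distrib flip: power_mult)
qed

lemma odd_div_4_add_div_2_iff:
  fixes p :: nat
  assumes "odd p"
  shows "odd (p div 4 + p div 2) \<longleftrightarrow> p mod 8 \<in> {3, 5}"
proof -
  have "p div 4 = 2 * (p div 8) + p mod 8 div 4" "p div 2 = 4 * (p div 8) + p mod 8 div 2"
    by presburger+
  moreover have "odd (p mod 8)" using assms by presburger
  moreover have "\<forall>r \<in> {..<8::nat}. odd r \<longrightarrow> (odd (r div 4 + r div 2) \<longleftrightarrow> r \<in> {3, 5})"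
    by (simp add: lessThan_nat_numeral)
  ultimately show ?thesis by simp
qed

lemma gauss_im_delta4_cong_3:
  assumes "odd p"
  shows "[gauss_im (delta4 p) (p - 1) = (if p mod 8 \<in> {3, 5} then -1 else 1)] (mod 3)"
proof -
  have "[(2::int) ^ (p div 2) = (-1) ^ (p div 2)] (mod 3)" by (rule cong_pow) (simp add: cong_def)
  then have "[gauss_im (delta4 p) (p - 1) = (-1) ^ (p div 4 + p div 2)] (mod 3)"
    unfolding gauss_im_delta4(2)[OF assms] power_add by (rule cong_scalar_left)
  moreover have "(-1 :: int) ^ (p div 4 + p div 2) = (if p mod 8 \<in> {3, 5} then -1 else 1)"
    unfolding minus_one_power_iff using odd_div_4_add_div_2_iff[OF assms] by presburger
  ultimately show ?thesis by simp
qed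

lemma Im_binomial_expansion:
  fixes s v d :: int
  shows "Im ((1 + \<i>) * (of_int s + of_int v * (\<i> - of_int d)) ^ p) =
    of_int (\<Sum>j\<le>p. int (p choose j) * s ^ j * v ^ (p - j) * gauss_im d (p - j))"
proof -
  define w where "w = \<i> - of_int d"
  have "(1 + \<i>) * (of_int s + of_int v * w) ^ p =
     (\<Sum>j\<le>p. of_int (int (p choose j) * s ^ j * v ^ (p - j)) *\<^sub>R ((1 + \<i>) * w ^ (p - j)))"
    unfolding binomial_ring by (simp add: sum_distrib_left power_mult_distrib scaleR_conv_of_real mult_ac)
  then show ?thesis by (simp add: of_int_gauss_im w_def)
qed

lemma H_eq_sum:
  assumes "gauss_im (delta4 p) p = 0" and "u + delta4 p * v \<noteq> 0"
  shows "H p u v = of_int (\<Sum>j = 1..p. int (p choose j) * (u + delta4 p * v) ^ (j - 1)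
                                          * v ^ (p - j) * gauss_im (delta4 p) (p - j))"
proof -
  define d s where "d = delta4 p" and "s = u + d * v"
  define f where "f j = int (p choose j) * s ^ j * v ^ (p - j) * gauss_im d (p - j)" for j
  have "complex_of_int u + \<i> * of_int v = of_int s + of_int v * (\<i> - of_int d)"
    by (simp add: s_def complex_eq_iff)
  then have "G p u v = of_int (\<Sum>j\<le>p. f j)"
    unfolding G_def f_def by (simp only: Im_binomial_expansion)
  also have "(\<Sum>j\<le>p. f j) = f 0 + (\<Sum>j = 1..p. f j)"
    by (simp add: atMost_atLeast0 sum.atLeast_Suc_atMost)
  also have "f 0 = 0" using assms(1) by (simp add: f_def d_def)
  also have "(\<Sum>j = 1..p. f j) =
      s * (\<Sum>j = 1..p. int (p choose j) * s ^ (j - 1) * v ^ (p - j) * gauss_im d (p - j))"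
    unfolding sum_distrib_left by (rule sum.cong) (auto simp: f_def power_eq_if)
  finally have G: "G p u v =
      of_int (s * (\<Sum>j = 1..p. int (p choose j) * s ^ (j - 1) * v ^ (p - j) * gauss_im d (p - j)))"
    by simp
  have "real_of_int (u + delta4 p * v) \<noteq> 0" using assms(2) by (metis of_int_eq_0_iff)
  then show ?thesis
    unfolding H_def G of_int_mult s_def d_def by (rule nonzero_mult_div_cancel_left)
qed

lemma add_2_le_power: "3 \<le> q \<Longrightarrow> 0 < b \<Longrightarrow> b + 2 \<le> (q::nat) ^ b"
proof (induction b)
  case (Suc b)
  then show ?case
  proof (cases "b = 0")
    case False
    with Suc have "b + 2 \<le> q ^ b" by simp
    moreover have "3 * q ^ b \<le> q * q ^ b" using Suc.prems by simp
    ultimately show ?thesis unfolding power_Suc by linarith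
  qed simp
qed simp

(* By j (j - 1) C(p,j) = p (p - 1) C(p-2,j-2), q^a divides q^b C(p,j), where q^b is the q-part of
   j (j - 1).  Only one of j, j - 1 is divisible by q, so q^b <= j, whence b <= j - 2 as q >= 3. *)
lemma prime_power_dvd_binomial_times_power:
  fixes q p j a :: nat
  assumes q: "prime q" "odd q" and a: "q ^ a dvd p - 1" and j: "2 \<le> j"
  shows "q ^ (a + 1) dvd (p choose j) * q ^ (j - 1)"
proof (cases "p choose j = 0")
  case False
  define b where "b = multiplicity q (j * (j - 1))"
  have "j * (j - 1) * (p choose j) = (j - 1) * p * ((p - 1) choose (j - 1))"
    using j by (simp add: times_binomial_minus1_eq)
  also have "\<dots> = p * (p - 1) * ((p - 2) choose (j - 2))"
    using times_binomial_minus1_eq[of "j - 1" "p - 1"] j by (simp add: numeral_2_eq_2)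
  finally have "q ^ a dvd j * (j - 1) * (p choose j)" using a by simp
  then have "a \<le> multiplicity q (j * (j - 1) * (p choose j))"
    using False j q by (intro multiplicity_geI) auto
  then have "a \<le> b + multiplicity q (p choose j)"
    using False j q by (simp add: prime_elem_multiplicity_mult_distrib b_def)
  moreover have "b + 2 \<le> j"
  proof -
    have "\<not> q dvd j \<or> \<not> q dvd j - 1"
    proof (rule ccontr)
      assume "\<not> ?thesis"
      then have "q dvd j - (j - 1)" by (simp add: dvd_diff_nat)
      then show False using j q by simp
    qed
    then have "b = multiplicity q (j - 1) \<or> b = multiplicity q j"
      using j q by (auto simp: b_def prime_elem_multiplicity_mult_distrib not_dvd_imp_multiplicity_0)
    then have "q ^ b \<le> j"
    proof
      assume "b = multiplicity q (j - 1)"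
      then have "q ^ b dvd j - 1" by (simp add: multiplicity_dvd)
      then show ?thesis using j by (auto dest: dvd_imp_le)
    next
      assume "b = multiplicity q j"
      then have "q ^ b dvd j" by (simp add: multiplicity_dvd)
      then show ?thesis using j by (auto dest: dvd_imp_le)
    qed
    moreover have "3 \<le> q" using prime_ge_2_nat[of q] q by (cases "q = 2") auto
    ultimately show ?thesis using add_2_le_power[of q b] j by (cases "b = 0") auto
  qed
  ultimately have "a + 1 \<le> multiplicity q ((p choose j) * q ^ (j - 1))"
    using False q by (simp add: prime_elem_multiplicity_mult_distrib)
  then show ?thesis by (rule multiplicity_dvd')
qed (simp only: mult_0 dvd_0_right)

lemma H_cong_linear_term:
  fixes q a m :: nat and u v :: int
  assumes q: "prime q" "odd q" and a: "q ^ a dvd p - 1" and "odd p" and "m \<ge> 1"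
    and uv: "u + delta4 p * v = int q ^ m" and "H p u v = 1"
  shows "[int p * v ^ (p - 1) * gauss_im (delta4 p) (p - 1) = 1] (mod int q ^ (a + 1))"
proof -
  define t where
    "t j = int (p choose j) * (int q ^ m) ^ (j - 1) * v ^ (p - j) * gauss_im (delta4 p) (p - j)" for j
  have "p \<ge> 1" using \<open>odd p\<close> by (cases p) auto
  have "real_of_int (\<Sum>j = 1..p. t j) = 1"
    using H_eq_sum[of p u v] gauss_im_delta4(1)[OF \<open>odd p\<close>] assms q
    by (simp add: uv t_def)
  then have sum: "t 1 + (\<Sum>j = 2..p. t j) = 1"
    using \<open>p \<ge> 1\<close> by (simp add: sum.atLeast_Suc_atMost numeral_2_eq_2 del: of_int_sum)
  have "int q ^ (a + 1) dvd (\<Sum>j = 2..p. t j)"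
  proof (rule dvd_sum)
    fix j assume j: "j \<in> {2..p}"
    have "q ^ (a + 1) dvd (p choose j) * q ^ (j - 1)"
      using j by (intro prime_power_dvd_binomial_times_power q a) simp
    then have "int q ^ (a + 1) dvd int (p choose j) * int q ^ (j - 1)"
      by (metis int_dvd_int_iff of_nat_mult of_nat_power)
    moreover have "int q ^ (j - 1) dvd (int q ^ m) ^ (j - 1)"
      using \<open>m \<ge> 1\<close> by (intro dvd_power_same dvd_power) auto
    ultimately show "int q ^ (a + 1) dvd t j"
      unfolding t_def by (meson dvd_mult2 dvd_trans mult_dvd_mono dvd_refl)
  qed
  moreover have "t 1 - 1 = - (\<Sum>j = 2..p. t j)" using sum by linarith
  ultimately show ?thesis by (simp add: cong_iff_dvd_diff t_def)
qed

lemma cong_power_1_mod_prime_power: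
  fixes x :: int and q a n :: nat
  assumes q: "prime q" and x: "\<not> int q dvd x" and n: "(q - 1) * q ^ a dvd n"
  shows "[x ^ n = 1] (mod int q ^ (a + 1))"
proof -
  have q': "prime (int q)" using q by simp
  then have "1 < int q ^ (a + 1)" by (intro one_less_power prime_gt_1_int) simp_all
  then have "residues (int q ^ (a + 1))" by unfold_locales
  moreover have "coprime x (int q ^ (a + 1))"
    using prime_imp_coprime[OF q' x] by (simp add: coprime_commute)
  ultimately have "[x ^ totient (nat (int q ^ (a + 1))) = 1] (mod int q ^ (a + 1))"
    by (rule residues.euler_theorem)
  moreover have "nat (int q ^ (a + 1)) = q ^ Suc a"
    by (simp only: Suc_eq_plus1 nat_int flip: of_nat_power)
  then have "totient (nat (int q ^ (a + 1))) = (q - 1) * q ^ a"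
    using totient_prime_power_Suc[OF q, of a] by (simp add: mult.commute)
  moreover obtain k where "n = (q - 1) * q ^ a * k" using n ..
  ultimately show ?thesis
    using cong_pow[of "x ^ ((q - 1) * q ^ a)" 1 "int q ^ (a + 1)" k] by (simp add: power_mult)
qed

lemma H_cong_p_times_gauss_im:
  fixes q a m :: nat and u v :: int
  assumes q: "prime q" "odd q" and a: "(q - 1) * q ^ a dvd p - 1" and "odd p" and "m \<ge> 1"
    and v: "\<not> int q dvd v" and uv: "u + delta4 p * v = int q ^ m" and "H p u v = 1"
  shows "[int p * gauss_im (delta4 p) (p - 1) = 1] (mod int q ^ (a + 1))"
proof -
  define c where "c = gauss_im (delta4 p) (p - 1)"
  have "q ^ a dvd p - 1" using a by (rule dvd_mult_right)
  have "[v ^ (p - 1) = 1] (mod int q ^ (a + 1))" by (rule cong_power_1_mod_prime_power[OF q(1) v a])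
  then have "[int p * c * v ^ (p - 1) = int p * c * 1] (mod int q ^ (a + 1))"
    by (rule cong_scalar_left)
  then have "[int p * c = int p * c * v ^ (p - 1)] (mod int q ^ (a + 1))"
    by (simp add: cong_sym_eq)
  also have "[int p * c * v ^ (p - 1) = 1] (mod int q ^ (a + 1))"
    using H_cong_linear_term[OF q \<open>q ^ a dvd p - 1\<close> \<open>odd p\<close> \<open>m \<ge> 1\<close> uv \<open>H p u v = 1\<close>]
    by (simp add: c_def mult_ac)
  finally show ?thesis unfolding c_def .
qed

lemma cong_1_prime_power_if_square_cong_1:
  fixes n q :: int
  assumes q: "prime q" "odd q" and "[n = 1] (mod q)" and "[n\<^sup>2 = 1] (mod q ^ k)"
  shows "[n = 1] (mod q ^ k)"
proof -
  have "\<not> q dvd n + 1"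
  proof
    assume "q dvd n + 1"
    moreover have "q dvd n - 1" using \<open>[n = 1] (mod q)\<close> by (simp add: cong_iff_dvd_diff)
    ultimately have "q dvd (n + 1) - (n - 1)" by (rule dvd_diff)
    then have "q dvd 2" by simp
    then have "q = 2" using prime_ge_2_int[OF q(1)] zdvd_imp_le[of q 2] by simp
    with q show False by simp
  qed
  then have "coprime (q ^ k) (n + 1)" using q by (simp add: prime_imp_coprime)
  moreover have "q ^ k dvd (n - 1) * (n + 1)"
    using \<open>[n\<^sup>2 = 1] (mod q ^ k)\<close> by (simp add: cong_iff_dvd_diff power2_eq_square algebra_simps)
  ultimately show ?thesis by (simp add: coprime_dvd_mult_left_iff cong_iff_dvd_diff)
qed

lemma int_dvd_pred_iff: "1 \<le> p \<Longrightarrow> int k dvd int p - 1 \<longleftrightarrow> k dvd p - 1"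
  by (metis int_dvd_int_iff of_nat_1 of_nat_diff)

lemma three_power_dvd_pred_lift:
  fixes p a :: nat
  assumes p: "odd p" "3 dvd p - 1" and a: "3 ^ a dvd p - 1"
    and pc: "[int p * gauss_im (delta4 p) (p - 1) = 1] (mod 3 ^ (a + 1))"
  shows "3 ^ (a + 1) dvd p - 1"
proof -
  define c where "c = gauss_im (delta4 p) (p - 1)"
  have "2 dvd p - 1" using p(1) by simp
  then have "(3 - 1) * 3 ^ a dvd p - 1" using a by (simp add: divides_mult)
  then have "[2 ^ (p - 1) = 1] (mod int 3 ^ (a + 1))"
    by (intro cong_power_1_mod_prime_power) simp_all
  then have c2: "[c\<^sup>2 = 1] (mod 3 ^ (a + 1))"
    using gauss_im_delta4_square[OF p(1)] by (simp add: c_def)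
  have "[(int p)\<^sup>2 = (int p * c)\<^sup>2] (mod 3 ^ (a + 1))"
    using cong_sym[OF cong_scalar_left[OF c2, of "(int p)\<^sup>2"]] by (simp add: power_mult_distrib)
  also have "[(int p * c)\<^sup>2 = 1] (mod 3 ^ (a + 1))"
    using cong_pow[OF pc, of 2] by (simp add: c_def)
  finally have p2: "[(int p)\<^sup>2 = 1] (mod 3 ^ (a + 1))" .
  have "1 \<le> p" using p by (cases p) auto
  then have "[int p = 1] (mod 3)"
    using p(2) int_dvd_pred_iff[of p 3] by (simp add: cong_iff_dvd_diff)
  from cong_1_prime_power_if_square_cong_1[OF _ _ this p2]
  have "[int p = 1] (mod 3 ^ (a + 1))" by simp
  then show ?thesis
    using \<open>1 \<le> p\<close> int_dvd_pred_iff[of p "3 ^ (a + 1)"] by (simp add: cong_iff_dvd_diff)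
qed

lemma mod_24_eq_5_or_11_iff:
  fixes p :: nat
  shows "p mod 24 = 5 \<or> p mod 24 = 11 \<longleftrightarrow> p mod 3 = 2 \<and> p mod 8 \<in> {3, 5}"
proof -
  have "p mod 3 = p mod 24 mod 3" "p mod 8 = p mod 24 mod 8" by (simp_all add: mod_mod_cancel)
  moreover have "\<forall>r \<in> {..<24::nat}. r = 5 \<or> r = 11 \<longleftrightarrow> r mod 3 = 2 \<and> r mod 8 \<in> {3, 5}"
    by (simp add: lessThan_nat_numeral)
  ultimately show ?thesis by simp
qed

lemma mod_24_eq_5_or_11_if_cong_mod_3:
  assumes "odd p" and "p mod 3 = 2"
    and pc: "[int p * gauss_im (delta4 p) (p - 1) = 1] (mod 3)"
  shows "p mod 24 = 5 \<or> p mod 24 = 11"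
proof -
  have "int p mod 3 = int (p mod 3)" by (simp add: of_nat_mod)
  then have "[int p = -1] (mod 3)" using \<open>p mod 3 = 2\<close> by (simp add: cong_def)
  then have "[int p * gauss_im (delta4 p) (p - 1) = -1 * (if p mod 8 \<in> {3, 5} then -1 else 1)] (mod 3)"
    by (rule cong_mult[OF _ gauss_im_delta4_cong_3[OF \<open>odd p\<close>]])
  from cong_trans[OF cong_sym[OF this] pc]
  have "[-1 * (if p mod 8 \<in> {3, 5} then -1 else 1) = (1::int)] (mod 3)" .
  then have "p mod 8 \<in> {3, 5}" by (cases "p mod 8 \<in> {3, 5}") (simp_all add: cong_def)
  with \<open>p mod 3 = 2\<close> show ?thesis by (simp add: mod_24_eq_5_or_11_iff)
qed

lemma not_dvd_right_if_gcd_eq_1: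
  fixes u v d q :: int
  assumes "gcd u v = 1" and "u + d * v = q ^ m" and "m \<ge> 1" and "\<not> is_unit q"
  shows "\<not> q dvd v"
proof
  assume "q dvd v"
  moreover have "u = q ^ m - d * v" using assms(2) by simp
  ultimately have "q dvd gcd u v" using \<open>m \<ge> 1\<close> by (simp add: dvd_power)
  with assms(1,4) show False by simp
qed

theorem lemma9:
  fixes p m :: nat and u v :: int
  assumes "prime p" and "p \<ge> 5" and "m \<ge> 1"
    and "gcd u v = 1"
    and "u + delta4 p * v = 3 ^ m"
    and "H p u v = 1"
  shows "p mod 24 = 5 \<or> p mod 24 = 11"
proof -
  define a where "a = multiplicity 3 (p - 1)"
  have "odd p" using assms(1,2) prime_odd_nat by simp
  have "\<not> 3 dvd p" using assms(1,2) primes_dvd_imp_eq[of 3 p] by auto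
  have "\<not> 3 dvd v" using not_dvd_right_if_gcd_eq_1[OF assms(4,5,3)] by simp
  have "p - 1 \<noteq> 0" using assms(2) by simp
  then have a: "3 ^ a dvd p - 1" "\<not> 3 ^ (a + 1) dvd p - 1"
    unfolding a_def by (simp add: multiplicity_dvd, subst power_dvd_iff_le_multiplicity, auto)
  have "2 dvd p - 1" using \<open>odd p\<close> by simp
  then have "(3 - 1) * 3 ^ a dvd p - 1" using a(1) by (simp add: divides_mult)
  then have pc: "[int p * gauss_im (delta4 p) (p - 1) = 1] (mod 3 ^ (a + 1))"
    using H_cong_p_times_gauss_im[of 3 a p m v u] \<open>odd p\<close> \<open>\<not> 3 dvd v\<close> assms by simp
  then have "\<not> 3 dvd p - 1" using three_power_dvd_pred_lift \<open>odd p\<close> a by blast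
  then have "a = 0" and "p mod 3 = 2"
    using \<open>\<not> 3 dvd p\<close> unfolding a_def by (simp_all add: not_dvd_imp_multiplicity_0) presburger
  then show ?thesis using mod_24_eq_5_or_11_if_cong_mod_3[OF \<open>odd p\<close>] pc by simp
qed

end
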